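(* Let $l,t,s,n$ be integers with $t\geq l$, $s\geq l+1\geq 3$ and $n\geq 2\binom{3s}{2}$. Then for every integer $x$ with $1\leq x\leq l-1$, $$ex(n,\{K_{l,t},M_{s+1}\},x)\leq (l-1)n+ex(2(s-l+1)+1,K_{l,t})-\frac{l(l-1)}{2}.$$
   Context: All graphs are finite and simple. $ex(m,K_{l,t})$ is the maximum number of edges of an $m$-vertex graph with no copy of the complete bipartite graph $K_{l,t}$; $M_{s+1}$ is the matching of $s+1$ disjoint edges. For a graph $G$ with matching number at most $s$, say $X\subseteq V(G)$ is admissible if $|X|+\sum_{i=1}^m\lfloor |V(C_i)|/2\rfloor\leq s$, where $C_1,\dots,C_m$ are the components of $G-X$; let $x(G)$ be the maximum size of an admissible set. Let $\mathscr{G}_x$ be the set of graphs on $n$ vertices containing neither $K_{l,t}$ nor $M_{s+1}$ as a subgraph and with $x(G)=x$, and $ex(n,\{K_{l,t},M_{s+1}\},x)=\max_{G\in\mathscr{G}_x}e(G)$. *)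

theory Defs
  imports Complex_Main
begin

definition simple_graph :: "'a set \<Rightarrow> 'a set set \<Rightarrow> bool" where
  "simple_graph V E \<longleftrightarrow> finite V \<and>
     (\<forall>e\<in>E. \<exists>a b. e = {a, b} \<and> a \<noteq> b \<and> a \<in> V \<and> b \<in> V)"

definition contains_Klt :: "'a set \<Rightarrow> 'a set set \<Rightarrow> nat \<Rightarrow> nat \<Rightarrow> bool" where
  "contains_Klt V E l t \<longleftrightarrow> (\<exists>A B. A \<subseteq> V \<and> B \<subseteq> V \<and> A \<inter> B = {} \<and>
     card A = l \<and> card B = t \<and> (\<forall>a\<in>A. \<forall>b\<in>B. {a, b} \<in> E))"

definition contains_matching :: "'a set set \<Rightarrow> nat \<Rightarrow> bool" where
  "contains_matching E k \<longleftrightarrow> (\<exists>M\<subseteq>E. finite M \<and> card M = k \<and>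
     (\<forall>e1\<in>M. \<forall>e2\<in>M. e1 \<noteq> e2 \<longrightarrow> e1 \<inter> e2 = {}))"

definition components_minus :: "'a set \<Rightarrow> 'a set set \<Rightarrow> 'a set \<Rightarrow> 'a set set" where
  "components_minus V E X =
     (let W = V - X; adj = (\<lambda>u v. u \<in> W \<and> v \<in> W \<and> {u, v} \<in> E)
      in (\<lambda>v. {u \<in> W. adj\<^sup>*\<^sup>* v u}) ` W)"

definition admissible :: "'a set \<Rightarrow> 'a set set \<Rightarrow> nat \<Rightarrow> 'a set \<Rightarrow> bool" where
  "admissible V E s X \<longleftrightarrow> X \<subseteq> V \<and>
     card X + (\<Sum>C\<in>components_minus V E X. card C div 2) \<le> s"

definition xnum :: "'a set \<Rightarrow> 'a set set \<Rightarrow> nat \<Rightarrow> nat" where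
  "xnum V E s = Max {card X | X. admissible V E s X}"

definition ex_Klt :: "nat \<Rightarrow> nat \<Rightarrow> nat \<Rightarrow> nat" where
  "ex_Klt m l t = Max {card E | E. simple_graph {0..<m} E \<and> \<not> contains_Klt {0..<m} E l t}"

text \<open>ex(n, {K_{l,t}, M_{s+1}}, x); the maximum over the (finite) family, 0 if the family is empty.\<close>
definition ex_KM :: "nat \<Rightarrow> nat \<Rightarrow> nat \<Rightarrow> nat \<Rightarrow> nat \<Rightarrow> nat" where
  "ex_KM n l t s x = Sup {card E | E. simple_graph {0..<n} E \<and> \<not> contains_Klt {0..<n} E l t
      \<and> \<not> contains_matching E (s + 1) \<and> xnum {0..<n} E s = x}"

end

theory Submission
  imports Defs
begin

text \<open>Take an admissible set \<open>X\<close> with \<open>|X| = x\<close>; one exists by Berge's formula, which follows from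
  Gallai's lemma on vertices missed by maximum matchings.  At most \<open>x choose 2 + x (n - x)\<close> edges
  meet \<open>X\<close>.  Gluing all components of \<open>G - X\<close> together at one vertex of each gives a graph
  with as many edges as \<open>G - X\<close> on at most \<open>2 \<Sum>\<^sub>i \<lfloor>|C\<^sub>i|/2\<rfloor> + 1 \<le> 2 (s - x) + 1\<close> vertices,
  and it is still \<open>K\<^sub>l\<^sub>,\<^sub>t\<close>-free because \<open>K\<^sub>l\<^sub>,\<^sub>t\<close> is 2-connected for \<open>l, t \<ge> 2\<close>.  For \<open>x = l - 1\<close>
  this is the claimed bound; for \<open>x \<le> l - 2\<close> the trivial bound \<open>(2s + 1) choose 2\<close> on the edges
  of \<open>G - X\<close> suffices, since \<open>n\<close> is large.\<close>

lemma simple_graph_finite_edges: "simple_graph V E \<Longrightarrow> finite E"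
  unfolding simple_graph_def by (rule finite_subset[of E "Pow V"]) auto

lemma simple_graph_edgeE:
  assumes "simple_graph V E" "e \<in> E"
  obtains a b where "e = {a, b}" "a \<noteq> b" "a \<in> V" "b \<in> V"
  using assms unfolding simple_graph_def by blast

lemma simple_graph_edge_other:
  assumes "simple_graph V E" "e \<in> E" "x \<in> e"
  obtains y where "e = {x, y}" "x \<noteq> y" "y \<in> V"
proof -
  obtain a b where "e = {a, b}" "a \<noteq> b" "a \<in> V" "b \<in> V"
    using simple_graph_edgeE[OF assms(1,2)] by blast
  then show ?thesis using that assms(3) by (metis insert_commute insertE singletonD)
qed

lemma simple_graph_edge_subset: "simple_graph V E \<Longrightarrow> e \<in> E \<Longrightarrow> e \<subseteq> V"
  by (auto elim: simple_graph_edgeE)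

lemma simple_graph_card_edge: "simple_graph V E \<Longrightarrow> e \<in> E \<Longrightarrow> card e = 2"
  by (auto elim: simple_graph_edgeE)

lemma simple_graph_subgraph:
  assumes "simple_graph V E" "F \<subseteq> E" "\<forall>e\<in>F. e \<subseteq> W" "finite W"
  shows "simple_graph W F"
  unfolding simple_graph_def
proof (intro conjI ballI)
  fix e assume "e \<in> F"
  then obtain a b where "e = {a, b}" "a \<noteq> b"
    using assms(1,2) by (auto elim: simple_graph_edgeE)
  moreover have "e \<subseteq> W" using assms(3) \<open>e \<in> F\<close> by blast
  ultimately show "\<exists>a b. e = {a, b} \<and> a \<noteq> b \<and> a \<in> W \<and> b \<in> W"
    by (intro exI[of _ a] exI[of _ b]) simp
qed (rule assms(4))

lemma simple_graph_card_edges_le: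
  assumes "simple_graph V E" shows "card E \<le> card V choose 2"
proof -
  have fin: "finite V" using assms unfolding simple_graph_def by simp
  have "E \<subseteq> {S. S \<subseteq> V \<and> card S = 2}"
    using simple_graph_edge_subset[OF assms] simple_graph_card_edge[OF assms] by blast
  then have "card E \<le> card {S. S \<subseteq> V \<and> card S = 2}"
    using fin by (intro card_mono) auto
  then show ?thesis using n_subsets[OF fin] by simp
qed

lemma finite_card_simple_graphs: "finite V \<Longrightarrow> finite {card E | E. simple_graph V E \<and> P E}"
  by (rule finite_subset[of _ "{0..card V choose 2}"]) (auto dest: simple_graph_card_edges_le)

definition matching :: "'a set set \<Rightarrow> 'a set set \<Rightarrow> bool" where
  "matching E M \<longleftrightarrow> M \<subseteq> E \<and> (\<forall>e1\<in>M. \<forall>e2\<in>M. e1 \<noteq> e2 \<longrightarrow> e1 \<inter> e2 = {})"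

definition max_matching :: "'a set set \<Rightarrow> 'a set set \<Rightarrow> bool" where
  "max_matching E M \<longleftrightarrow> matching E M \<and> (\<forall>M'. matching E M' \<longrightarrow> card M' \<le> card M)"

lemma matching_finite:
  assumes "simple_graph V E" "matching E M" shows "finite M"
  using assms(2) simple_graph_finite_edges[OF assms(1)] unfolding matching_def
  by (rule finite_subset[OF conjunct1])

lemma matching_Union_subset:
  assumes "simple_graph V E" "matching E M" shows "\<Union>M \<subseteq> V"
  using assms(2) simple_graph_edge_subset[OF assms(1)] unfolding matching_def by auto

lemma finite_Union_matching:
  assumes "simple_graph V E" "matching E M" shows "finite (\<Union>M)"
  using assms matching_Union_subset[OF assms] finite_subset unfolding simple_graph_def by blast

lemma card_Union_matching:
  assumes "simple_graph V E" "matching E M"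
  shows "card (\<Union>M) = 2 * card M"
proof -
  have card_e: "card e = 2" if "e \<in> M" for e
    using assms that simple_graph_card_edge[OF assms(1)] by (auto simp: matching_def)
  have "pairwise disjnt M"
    using assms(2) by (auto simp: matching_def pairwise_def disjnt_def)
  moreover have "finite e" if "e \<in> M" for e
    using card_e[OF that] card.infinite by fastforce
  ultimately have "card (\<Union>M) = (\<Sum>e\<in>M. card e)"
    by (rule card_Union_disjoint)
  also have "\<dots> = 2 * card M" using card_e by simp
  finally show ?thesis .
qed

lemma contains_matchingI:
  assumes "matching E M" "finite M" "k \<le> card M"
  shows "contains_matching E k"
proof -
  obtain M' where M': "M' \<subseteq> M" "card M' = k" "finite M'"
    using obtain_subset_with_card_n[OF assms(3)] by blast
  then have "matching E M'" using assms(1) unfolding matching_def by (meson subset_trans subsetD)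
  then show ?thesis
    using M' unfolding contains_matching_def matching_def by (intro exI[of _ M']) simp
qed

lemma contains_matchingD: "contains_matching E k \<Longrightarrow> \<exists>M. matching E M \<and> card M = k"
  unfolding contains_matching_def matching_def by blast

lemma matching_insert:
  "matching E M \<Longrightarrow> e \<in> E \<Longrightarrow> e \<inter> \<Union>M = {} \<Longrightarrow> matching E (insert e M)"
  unfolding matching_def by blast

lemma max_matching_exists:
  assumes "simple_graph V E" shows "\<exists>M. max_matching E M"
proof -
  have "matching E {}" unfolding matching_def by simp
  moreover have "\<forall>M. matching E M \<longrightarrow> card M < Suc (card E)"
    using simple_graph_finite_edges[OF assms]
    by (auto simp: matching_def intro: card_mono le_imp_less_Suc)
  ultimately show ?thesis
    unfolding max_matching_def using ex_has_greatest_nat[of "matching E"] by blast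
qed

lemma max_matching_no_free_edge:
  assumes "simple_graph V E" "max_matching E M" "e \<in> E"
  shows "e \<inter> \<Union>M \<noteq> {}"
proof
  assume free: "e \<inter> \<Union>M = {}"
  have "e \<noteq> {}" using simple_graph_card_edge[OF assms(1,3)] by auto
  then have "e \<notin> M" using free by blast
  moreover have "matching E (insert e M)"
    using assms(2,3) free by (intro matching_insert) (auto simp: max_matching_def)
  ultimately have "card (insert e M) \<le> card M" using assms(2) unfolding max_matching_def by blast
  then show False
    using \<open>e \<notin> M\<close> matching_finite[OF assms(1)] assms(2) by (simp add: max_matching_def)
qed

section \<open>Gallai's lemma\<close>

lemma max_matching_swap_edge:
  assumes sg: "simple_graph V E" and M: "max_matching E M" and N: "max_matching E N"
    and "e \<in> M" "x \<in> e" "x \<notin> \<Union>N" "w \<notin> \<Union>N" "w \<noteq> x"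
  shows "\<exists>N'. max_matching E N' \<and> w \<notin> \<Union>N' \<and> card (M \<inter> N) < card (M \<inter> N')"
proof -
  have mM: "matching E M" and mN: "matching E N" using M N by (auto simp: max_matching_def)
  have eE: "e \<in> E" using mM \<open>e \<in> M\<close> by (auto simp: matching_def)
  obtain y where e: "e = {x, y}" "x \<noteq> y" using simple_graph_edge_other[OF sg eE \<open>x \<in> e\<close>] by blast
  have "y \<in> \<Union>N" using max_matching_no_free_edge[OF sg N eE] e \<open>x \<notin> \<Union>N\<close> by blast
  then obtain f where f: "f \<in> N" "y \<in> f" by blast
  have eN: "e \<notin> N" using \<open>x \<notin> \<Union>N\<close> \<open>x \<in> e\<close> by blast
  have fM: "f \<notin> M"
  proof
    assume "f \<in> M"
    moreover have "f \<noteq> e" using f(1) eN by blast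
    ultimately have "f \<inter> e = {}" using mM \<open>e \<in> M\<close> by (auto simp: matching_def)
    then show False using f(2) e(1) by blast
  qed
  define N' where "N' = insert e (N - {f})"
  have "e \<inter> \<Union>(N - {f}) = {}"
    using mN f \<open>x \<notin> \<Union>N\<close> e unfolding matching_def by blast
  then have "matching E N'"
    unfolding N'_def using mN eE by (intro matching_insert) (auto simp: matching_def)
  moreover have "card N' = card N"
    unfolding N'_def using matching_finite[OF sg mN] f(1) eN
    by (metis DiffD1 card_Suc_Diff1 card_insert_disjoint finite_Diff)
  ultimately have "max_matching E N'" using N by (simp add: max_matching_def)
  moreover have "w \<notin> \<Union>N'"
    unfolding N'_def using \<open>w \<notin> \<Union>N\<close> \<open>y \<in> \<Union>N\<close> \<open>w \<noteq> x\<close> e by auto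
  moreover have "M \<inter> N' = insert e (M \<inter> N)" unfolding N'_def using \<open>e \<in> M\<close> fM by auto
  then have "card (M \<inter> N) < card (M \<inter> N')"
    using matching_finite[OF sg mN] eN by simp
  ultimately show ?thesis by blast
qed

lemma card_Union_diff_max_matchings:
  assumes sg: "simple_graph V E" and "max_matching E M" "max_matching E N"
  shows "card (\<Union>N - \<Union>M) = card (\<Union>M - \<Union>N)"
proof -
  have "card N = card M" using assms(2,3) by (simp add: max_matching_def le_antisym)
  then have "card (\<Union>N) = card (\<Union>M)"
    using card_Union_matching[OF sg] assms(2,3) by (simp add: max_matching_def)
  moreover have "finite (\<Union>M)" "finite (\<Union>N)"
    using finite_Union_matching[OF sg] assms(2,3) by (auto simp: max_matching_def)
  ultimately show ?thesis by (intro antisym card_le_sym_Diff) simp_all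
qed

text \<open>If \<open>N\<close> covers two vertices missed by \<open>M\<close>, then \<open>M\<close> has an edge sticking out of \<open>\<Union>N\<close> at a
  vertex other than \<open>w\<close>, and swapping it into \<open>N\<close> moves \<open>N\<close> closer to \<open>M\<close>.\<close>
lemma max_matching_exchange:
  assumes sg: "simple_graph V E" and M: "max_matching E M" and N: "max_matching E N"
    and "w \<notin> \<Union>N" "{u, v} \<subseteq> \<Union>N - \<Union>M" "u \<noteq> v"
  shows "\<exists>N'. max_matching E N' \<and> w \<notin> \<Union>N' \<and> card (M \<inter> N) < card (M \<inter> N')"
proof -
  have "matching E N" using N by (simp add: max_matching_def)
  then have "card {u, v} \<le> card (\<Union>N - \<Union>M)"
    using assms(5) finite_Union_matching[OF sg] by (intro card_mono) auto
  then have "2 \<le> card (\<Union>M - \<Union>N)"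
    using assms(6) card_Union_diff_max_matchings[OF sg M N] by simp
  then have "\<not> \<Union>M - \<Union>N \<subseteq> {w}" using card_mono[of "{w}" "\<Union>M - \<Union>N"] by auto
  then obtain x e where "e \<in> M" "x \<in> e" "x \<notin> \<Union>N" "x \<noteq> w" by blast
  then show ?thesis using max_matching_swap_edge[OF sg M N] assms(4) by blast
qed

lemma max_matching_closest_avoiding:
  assumes "finite M" "max_matching E N0" "w \<notin> \<Union>N0"
  obtains N where "max_matching E N" "w \<notin> \<Union>N"
    "\<And>N'. max_matching E N' \<Longrightarrow> w \<notin> \<Union>N' \<Longrightarrow> card (M \<inter> N') \<le> card (M \<inter> N)"
proof -
  have "\<forall>N. card (M \<inter> N) < Suc (card M)"
    using assms(1) by (simp add: card_mono le_imp_less_Suc)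
  then show ?thesis
    using ex_has_greatest_nat[of "\<lambda>N. max_matching E N \<and> w \<notin> \<Union>N" N0 "\<lambda>N. card (M \<inter> N)"]
      assms(2,3) that by blast
qed

definition graph_adj :: "'a set \<Rightarrow> 'a set set \<Rightarrow> 'a \<Rightarrow> 'a \<Rightarrow> bool" where
  "graph_adj V E u v \<longleftrightarrow> u \<in> V \<and> v \<in> V \<and> {u, v} \<in> E"

lemma graph_adj_sym: "graph_adj V E u v \<Longrightarrow> graph_adj V E v u"
  unfolding graph_adj_def by (simp add: insert_commute)

text \<open>For a path \<open>u w \<dots> v\<close>, take a maximum matching \<open>N\<close> avoiding \<open>w\<close> as close
  to \<open>M\<close> as possible; by induction \<open>N\<close> covers \<open>u\<close> and \<open>v\<close>, contradicting the exchange lemma.\<close>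
lemma uncovered_vertices_not_connected:
  assumes sg: "simple_graph V E"
    and avoidable: "\<forall>v\<in>V. \<exists>M. max_matching E M \<and> v \<notin> \<Union>M"
  shows "max_matching E M \<Longrightarrow> u \<notin> \<Union>M \<Longrightarrow> v \<notin> \<Union>M \<Longrightarrow> u \<noteq> v
    \<Longrightarrow> \<not> (graph_adj V E ^^ n) u v"
proof (induction n arbitrary: M u v rule: less_induct)
  case (less n)
  have adjacent: False
    if "max_matching E M'" "u' \<notin> \<Union>M'" "v' \<notin> \<Union>M'" "graph_adj V E u' v'" for M' u' v'
    using max_matching_no_free_edge[OF sg that(1), of "{u', v'}"] that by (auto simp: graph_adj_def)
  show ?case
  proof
    assume path: "(graph_adj V E ^^ n) u v"
    consider "n = 0" | "n = 1" | n' where "n = Suc n'" "n' \<noteq> 0" by (cases n) auto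
    then show False
    proof cases
      case 1
      then show False using path less.prems by simp
    next
      case 2
      then show False using path less.prems adjacent by auto
    next
      case 3
      then obtain w where uw: "graph_adj V E u w" and wv: "(graph_adj V E ^^ n') w v"
        using path by (metis relpowp_Suc_D2)
      have "w \<in> \<Union>M" using adjacent[OF less.prems(1,2) _ uw] by blast
      then have "w \<noteq> v" using less.prems(3) by blast
      have "finite M" using less.prems(1) matching_finite[OF sg] by (simp add: max_matching_def)
      moreover obtain N0 where "max_matching E N0" "w \<notin> \<Union>N0"
        using avoidable uw by (auto simp: graph_adj_def)
      ultimately obtain N where N: "max_matching E N" "w \<notin> \<Union>N"
        and closest: "\<And>N'. max_matching E N' \<Longrightarrow> w \<notin> \<Union>N' \<Longrightarrow> card (M \<inter> N') \<le> card (M \<inter> N)"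
        by (rule max_matching_closest_avoiding) auto
      have "u \<in> \<Union>N" using adjacent[OF N _ graph_adj_sym[OF uw]] by blast
      moreover have "v \<in> \<Union>N" using less.IH[of n' N w v] 3 N \<open>w \<noteq> v\<close> wv by blast
      ultimately have "{u, v} \<subseteq> \<Union>N - \<Union>M" using less.prems(2,3) by blast
      then show False
        using max_matching_exchange[OF sg less.prems(1) N(1,2) _ less.prems(4)] closest
        by (meson not_le)
    qed
  qed
qed

definition reach :: "'a set \<Rightarrow> 'a set set \<Rightarrow> 'a rel" where
  "reach V E = {(u, v). u \<in> V \<and> v \<in> V \<and> (graph_adj V E)\<^sup>*\<^sup>* u v}"

lemma equiv_reach: "equiv V (reach V E)"
proof (rule equivI)
  have "symp (graph_adj V E)" by (rule sympI) (rule graph_adj_sym)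
  then have "(graph_adj V E)\<^sup>*\<^sup>* v u" if "(graph_adj V E)\<^sup>*\<^sup>* u v" for u v
    using symp_rtranclp sympD that by metis
  then show "sym (reach V E)" unfolding reach_def sym_def by simp
  show "trans (reach V E)"
    unfolding reach_def trans_def by (auto intro: rtranclp_trans)
qed (auto simp: reach_def refl_on_def)

lemma reach_sym: "(u, v) \<in> reach V E \<Longrightarrow> (v, u) \<in> reach V E"
  using equiv_reach[of V E] by (auto simp: equiv_def dest: symD)

lemma reach_trans: "(u, v) \<in> reach V E \<Longrightarrow> (v, w) \<in> reach V E \<Longrightarrow> (u, w) \<in> reach V E"
  using equiv_reach[of V E] by (auto simp: equiv_def dest: transD)

lemma reach_edge: "{u, v} \<in> E \<Longrightarrow> u \<in> V \<Longrightarrow> v \<in> V \<Longrightarrow> (u, v) \<in> reach V E"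
  by (auto simp: reach_def graph_adj_def)

lemma reach_cong:
  assumes "\<And>u v. u \<in> V \<Longrightarrow> v \<in> V \<Longrightarrow> {u, v} \<in> E \<longleftrightarrow> {u, v} \<in> E'"
  shows "reach V E = reach V E'"
proof -
  have "graph_adj V E = graph_adj V E'"
    using assms by (intro ext) (auto simp: graph_adj_def)
  then show ?thesis by (simp add: reach_def)
qed

lemma components_minus_eq_quotient:
  "components_minus V E X = (V - X) // reach (V - X) E"
proof -
  have "components_minus V E X = (\<lambda>x. reach (V - X) E `` {x}) ` (V - X)"
    unfolding components_minus_def Let_def reach_def graph_adj_def by (intro image_cong) auto
  then show ?thesis by (simp add: proj_image[symmetric] proj_def)
qed

lemma sum_card_quotient:
  assumes "finite A" "equiv A r"
  shows "(\<Sum>C\<in>A // r. card C) = card A"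
proof -
  have "card (\<Union>(A // r)) = (\<Sum>C\<in>A // r. card C)"
  proof (rule card_Union_disjoint)
    show "pairwise disjnt (A // r)"
      using quotient_disj[OF assms(2)] by (auto simp: pairwise_def disjnt_def)
    show "finite C" if "C \<in> A // r" for C
      using finite_equiv_class[OF assms(1) equiv_type[OF assms(2)] that] .
  qed
  then show ?thesis using Union_quotient[OF assms(2)] by simp
qed

lemma edge_in_class:
  assumes sg: "simple_graph V E" and "e \<in> E" "C \<in> V // reach V E" "z \<in> e" "z \<in> C"
  shows "e \<subseteq> C"
proof -
  obtain y where y: "e = {z, y}" "y \<in> V" using simple_graph_edge_other[OF sg assms(2,4)] by blast
  have "z \<in> V" using simple_graph_edge_subset[OF sg assms(2)] assms(4) by blast
  then have "y \<in> C"
    using in_quotient_imp_closed[OF equiv_reach assms(3,5) reach_edge] y assms(2) by blast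
  then show ?thesis using y assms(5) by blast
qed

section \<open>Berge's formula\<close>

text \<open>Each component misses at most one vertex of \<open>M\<close>, by Gallai's lemma.\<close>
lemma card_class_le_max_matching:
  assumes sg: "simple_graph V E"
    and avoidable: "\<forall>v\<in>V. \<exists>M. max_matching E M \<and> v \<notin> \<Union>M"
    and M: "max_matching E M" and C: "C \<in> V // reach V E"
  shows "card C \<le> 2 * card {e\<in>M. e \<subseteq> C} + 1"
proof -
  have mM: "matching E M" using M by (simp add: max_matching_def)
  have "matching E {e\<in>M. e \<subseteq> C}" using mM by (auto simp: matching_def)
  moreover have "C \<inter> \<Union>M = \<Union>{e\<in>M. e \<subseteq> C}"
    using edge_in_class[OF sg _ C] mM by (auto simp: matching_def)
  ultimately have covered: "card (C \<inter> \<Union>M) = 2 * card {e\<in>M. e \<subseteq> C}"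
    using card_Union_matching[OF sg] by simp
  have "a = b" if "a \<in> C - \<Union>M" "b \<in> C - \<Union>M" for a b
  proof (rule ccontr)
    assume "a \<noteq> b"
    have "(a, b) \<in> reach V E" using in_quotient_imp_in_rel[OF equiv_reach C] that by blast
    then obtain n where "(graph_adj V E ^^ n) a b"
      unfolding reach_def using rtranclp_imp_relpowp by fast
    then show False
      using uncovered_vertices_not_connected[OF sg avoidable M] that \<open>a \<noteq> b\<close> by blast
  qed
  moreover have "finite C"
    using sg finite_equiv_class[OF _ equiv_type[OF equiv_reach] C] by (simp add: simple_graph_def)
  ultimately have "card (C - \<Union>M) \<le> 1" by (simp add: card_le_Suc0_iff_eq)
  moreover have "card C = card (C \<inter> \<Union>M) + card (C - \<Union>M)"
    using \<open>finite C\<close> by (rule card_Int_Diff)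
  ultimately show ?thesis using covered by linarith
qed

lemma sum_half_classes_le_max_matching:
  assumes sg: "simple_graph V E"
    and avoidable: "\<forall>v\<in>V. \<exists>M. max_matching E M \<and> v \<notin> \<Union>M"
    and M: "max_matching E M"
  shows "(\<Sum>C\<in>V // reach V E. card C div 2) \<le> card M"
proof -
  define inside where "inside C = {e\<in>M. e \<subseteq> C}" for C
  have mM: "matching E M" using M by (simp add: max_matching_def)
  have finV: "finite V" using sg by (simp add: simple_graph_def)
  have disjoint: "inside C \<inter> inside C' = {}"
    if "C \<in> V // reach V E" "C' \<in> V // reach V E" "C \<noteq> C'" for C C'
  proof -
    have "e = {}" if "e \<in> inside C" "e \<in> inside C'" for e
      using that quotient_disj[OF equiv_reach, of C V E C'] \<open>C \<in> _\<close> \<open>C' \<in> _\<close> \<open>C \<noteq> C'\<close>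
      by (auto simp: inside_def)
    moreover have "e \<noteq> {}" if "e \<in> M" for e
      using simple_graph_card_edge[OF sg] mM that by (force simp: matching_def)
    ultimately show ?thesis by (auto simp: inside_def)
  qed
  have "(\<Sum>C\<in>V // reach V E. card C div 2) \<le> (\<Sum>C\<in>V // reach V E. card (inside C))"
    using card_class_le_max_matching[OF sg avoidable M]
    by (intro sum_mono) (fastforce simp: inside_def)
  also have "\<dots> = card (\<Union>C\<in>V // reach V E. inside C)"
    using disjoint finite_quotient[OF finV equiv_type[OF equiv_reach]] matching_finite[OF sg mM]
    by (intro card_UN_disjoint[symmetric]) (auto simp: inside_def)
  also have "\<dots> \<le> card M"
    using matching_finite[OF sg mM] by (intro card_mono) (auto simp: inside_def)
  finally show ?thesis .
qed

lemma simple_graph_delete_vertex: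
  assumes sg: "simple_graph V E" shows "simple_graph (V - {v}) {e\<in>E. v \<notin> e}"
proof (rule simple_graph_subgraph[OF sg])
  show "\<forall>e\<in>{e\<in>E. v \<notin> e}. e \<subseteq> V - {v}"
    using simple_graph_edge_subset[OF sg] by blast
qed (use sg in \<open>auto simp: simple_graph_def\<close>)

lemma matching_delete_covered:
  assumes M: "max_matching E M" and covered: "\<And>N. max_matching E N \<Longrightarrow> v \<in> \<Union>N"
  shows "\<not> contains_matching {e\<in>E. v \<notin> e} (card M)"
proof
  assume "contains_matching {e\<in>E. v \<notin> e} (card M)"
  then obtain N where N: "matching {e\<in>E. v \<notin> e} N" "card N = card M"
    using contains_matchingD by blast
  then have "max_matching E N" using M by (auto simp: max_matching_def matching_def)
  then show False using covered N(1) by (auto simp: matching_def)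
qed

lemma admissible_delete_vertex:
  assumes X: "admissible (V - {v}) {e\<in>E. v \<notin> e} k X" and "v \<in> V" "finite V"
  shows "admissible V E (Suc k) (insert v X)"
proof -
  have XV: "X \<subseteq> V - {v}" using X by (simp add: admissible_def)
  moreover have "finite (V - {v})" using assms(3) by simp
  ultimately have "v \<notin> X" "finite X" by (auto intro: finite_subset)
  then have "card (insert v X) = Suc (card X)" by simp
  moreover have W: "V - {v} - X = V - insert v X" by blast
  have "reach (V - insert v X) {e\<in>E. v \<notin> e} = reach (V - insert v X) E"
    by (rule reach_cong) auto
  then have "components_minus (V - {v}) {e\<in>E. v \<notin> e} X = components_minus V E (insert v X)"
    unfolding components_minus_eq_quotient W by simp
  moreover have "insert v X \<subseteq> V" using XV \<open>v \<in> V\<close> by blast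
  ultimately show ?thesis using X unfolding admissible_def by simp
qed

text \<open>Berge's formula, in the form needed here.  If a vertex \<open>v\<close> is covered by every maximum
  matching, delete it and induct; otherwise Gallai's lemma applies with \<open>X = {}\<close>.\<close>
lemma admissible_exists:
  assumes "simple_graph V E" "\<not> contains_matching E (s + 1)"
  shows "\<exists>X. admissible V E s X"
  using assms
proof (induction "card V" arbitrary: V E s rule: less_induct)
  case less
  note sg = less.prems(1)
  obtain M where M: "max_matching E M" using max_matching_exists[OF sg] by blast
  then have mM: "matching E M" by (simp add: max_matching_def)
  have "card M \<le> s"
    using contains_matchingI[OF mM matching_finite[OF sg mM], of "s + 1"] less.prems(2) by linarith
  show ?case
  proof (cases "\<forall>v\<in>V. \<exists>N. max_matching E N \<and> v \<notin> \<Union>N")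
    case True
    then have "(\<Sum>C\<in>V // reach V E. card C div 2) \<le> s"
      using sum_half_classes_le_max_matching[OF sg _ M] \<open>card M \<le> s\<close> by (meson le_trans)
    then have "admissible V E s {}"
      by (simp add: admissible_def components_minus_eq_quotient)
    then show ?thesis by blast
  next
    case False
    then obtain v where v: "v \<in> V" and covered: "\<And>N. max_matching E N \<Longrightarrow> v \<in> \<Union>N" by blast
    have "M \<noteq> {}" using covered[OF M] by auto
    then obtain k where k: "card M = Suc k"
      using matching_finite[OF sg mM] by (cases "card M") auto
    have finV: "finite V" using sg by (simp add: simple_graph_def)
    then have "card (V - {v}) < card V" using v by (rule card_Diff1_less)
    then obtain X where "admissible (V - {v}) {e\<in>E. v \<notin> e} k X"
      using less.hyps simple_graph_delete_vertex[OF sg] matching_delete_covered[OF M covered] k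
      by (metis Suc_eq_plus1)
    then have "admissible V E (card M) (insert v X)"
      using admissible_delete_vertex v finV k by simp
    then have "admissible V E s (insert v X)"
      using \<open>card M \<le> s\<close> unfolding admissible_def by (meson le_trans)
    then show ?thesis by blast
  qed
qed

text \<open>Without \<open>admissible_exists\<close>, \<open>xnum\<close> would be the unspecified value \<open>Max {}\<close>.\<close>
lemma admissible_card_xnum:
  assumes "simple_graph V E" "\<not> contains_matching E (s + 1)"
  obtains X where "admissible V E s X" "card X = xnum V E s"
proof -
  let ?S = "{card X | X. admissible V E s X}"
  have "finite V" using assms(1) by (simp add: simple_graph_def)
  then have "card X \<le> card V" if "admissible V E s X" for X
    using that by (simp add: admissible_def card_mono)
  then have "?S \<subseteq> {0..card V}" by auto
  then have "finite ?S" by (rule finite_subset) simp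
  moreover have "?S \<noteq> {}" using admissible_exists[OF assms] by blast
  ultimately have "xnum V E s \<in> ?S" unfolding xnum_def by (rule Max_in)
  then obtain X where "admissible V E s X" "card X = xnum V E s" by auto
  then show ?thesis by (rule that)
qed

section \<open>Complete bipartite subgraphs\<close>

lemma contains_Klt_inj_image:
  assumes inj: "inj_on \<psi> (A \<union> B)" and "A \<inter> B = {}" "card A = l" "card B = t"
    and "\<psi> ` (A \<union> B) \<subseteq> V" and "\<forall>a\<in>A. \<forall>b\<in>B. {\<psi> a, \<psi> b} \<in> E"
  shows "contains_Klt V E l t"
proof -
  have "\<psi> ` A \<inter> \<psi> ` B = {}"
    using inj_on_image_Int[OF inj, of A B] assms(2) by simp
  moreover have "card (\<psi> ` A) = l" "card (\<psi> ` B) = t"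
    using card_image[OF inj_on_subset[OF inj]] assms(3,4) by auto
  ultimately show ?thesis
    unfolding contains_Klt_def using assms(5,6)
    by (intro exI[of _ "\<psi> ` A"] exI[of _ "\<psi> ` B"]) auto
qed

lemma contains_Klt_mono:
  assumes "contains_Klt V F l t" "F \<subseteq> E" "V \<subseteq> V'"
  shows "contains_Klt V' E l t"
proof -
  obtain A B where "A \<subseteq> V" "B \<subseteq> V" "A \<inter> B = {}" "card A = l" "card B = t"
    "\<forall>a\<in>A. \<forall>b\<in>B. {a, b} \<in> F"
    using assms(1) unfolding contains_Klt_def by blast
  then show ?thesis
    unfolding contains_Klt_def using assms(2,3) by (intro exI[of _ A] exI[of _ B]) auto
qed

lemma simple_graph_image:
  assumes sg: "simple_graph U F" and inj: "inj_on h U"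
  shows "simple_graph (h ` U) ((`) h ` F)"
  unfolding simple_graph_def
proof (intro conjI ballI)
  show "finite (h ` U)" using sg by (simp add: simple_graph_def)
  fix e' assume "e' \<in> (`) h ` F"
  then obtain e where "e \<in> F" "e' = h ` e" by blast
  moreover obtain a b where "e = {a, b}" "a \<noteq> b" "a \<in> U" "b \<in> U"
    using simple_graph_edgeE[OF sg \<open>e \<in> F\<close>] by blast
  moreover have "h a \<noteq> h b" using calculation(4-6) inj by (auto dest: inj_onD)
  ultimately show "\<exists>a b. e' = {a, b} \<and> a \<noteq> b \<and> a \<in> h ` U \<and> b \<in> h ` U"
    by (intro exI[of _ "h a"] exI[of _ "h b"]) simp
qed

text \<open>Since \<open>l, t \<ge> 1\<close>, every vertex of a copy of \<open>K\<^sub>l\<^sub>,\<^sub>t\<close> lies on one of its edges, so the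
  ambient vertex set \<open>V'\<close> is irrelevant.\<close>
lemma contains_Klt_relabel:
  assumes sg: "simple_graph U F" and inj: "inj_on h U" and "1 \<le> l" "1 \<le> t"
    and "contains_Klt V' ((`) h ` F) l t"
  shows "contains_Klt U F l t"
proof -
  obtain A B where AB: "A \<inter> B = {}" "card A = l" "card B = t"
    and edges: "\<And>a b. a \<in> A \<Longrightarrow> b \<in> B \<Longrightarrow> {a, b} \<in> (`) h ` F"
    using assms(5) unfolding contains_Klt_def by blast
  define \<psi> where "\<psi> = the_inv_into U h"
  have "A \<noteq> {}" "B \<noteq> {}" using AB(2,3) assms(3,4) by auto
  have image_in_U: "{a, b} \<subseteq> h ` U" if ab: "a \<in> A" "b \<in> B" for a b
  proof -
    obtain e where "{a, b} = h ` e" "e \<in> F" using edges[OF ab] by (rule imageE)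
    then show ?thesis using image_mono[OF simple_graph_edge_subset[OF sg \<open>e \<in> F\<close>]] by simp
  qed
  have ABU: "A \<union> B \<subseteq> h ` U"
  proof
    fix x assume "x \<in> A \<union> B"
    moreover obtain a b where "a \<in> A" "b \<in> B" using \<open>A \<noteq> {}\<close> \<open>B \<noteq> {}\<close> by blast
    ultimately show "x \<in> h ` U" using image_in_U[of x b] image_in_U[of a x] by auto
  qed
  have inj_\<psi>: "inj_on \<psi> (A \<union> B)"
    unfolding \<psi>_def using inj_on_the_inv_into[OF inj] ABU by (rule inj_on_subset)
  have \<psi>_U: "\<psi> ` (A \<union> B) \<subseteq> U"
  proof (rule image_subsetI)
    fix x assume "x \<in> A \<union> B"
    then show "\<psi> x \<in> U" unfolding \<psi>_def using ABU by (intro the_inv_into_into[OF inj]) auto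
  qed
  have \<psi>_edges: "{\<psi> a, \<psi> b} \<in> F" if ab: "a \<in> A" "b \<in> B" for a b
  proof -
    obtain e where e: "{a, b} = h ` e" "e \<in> F" using edges[OF ab] by (rule imageE)
    have "\<psi> (h x) = x" if "x \<in> e" for x
      unfolding \<psi>_def using simple_graph_edge_subset[OF sg e(2)] that
      by (intro the_inv_into_f_f[OF inj]) auto
    then have "\<psi> ` h ` e = e" by (simp add: image_image)
    then have "{\<psi> a, \<psi> b} = e" unfolding e(1)[symmetric] by simp
    then show ?thesis using e(2) by simp
  qed
  show ?thesis using \<psi>_edges by (intro contains_Klt_inj_image[OF inj_\<psi> AB \<psi>_U]) blast
qed

lemma card_le_ex_Klt:
  assumes sg: "simple_graph U F" and free: "\<not> contains_Klt U F l t" and "card U \<le> m"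
    and "1 \<le> l" "1 \<le> t"
  shows "card F \<le> ex_Klt m l t"
proof -
  have "finite U" using sg by (simp add: simple_graph_def)
  then obtain h where h: "bij_betw h U {0..<card U}" using ex_bij_betw_finite_nat by blast
  then have inj: "inj_on h U" and hU: "h ` U \<subseteq> {0..<m}"
    using assms(3) by (auto simp: bij_betw_def)
  define F' where "F' = (`) h ` F"
  have "\<Union>F \<subseteq> U" by (auto dest: simple_graph_edge_subset[OF sg])
  then have "card F' = card F"
    unfolding F'_def by (intro card_image inj_on_image inj_on_subset[OF inj])
  moreover have "simple_graph {0..<m} F'"
  proof (rule simple_graph_subgraph)
    show "simple_graph (h ` U) F'" unfolding F'_def by (rule simple_graph_image[OF sg inj])
    show "\<forall>e\<in>F'. e \<subseteq> {0..<m}"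
    proof
      fix e assume "e \<in> F'"
      with \<open>simple_graph (h ` U) F'\<close> have "e \<subseteq> h ` U" by (rule simple_graph_edge_subset)
      then show "e \<subseteq> {0..<m}" using hU by (rule subset_trans)
    qed
  qed simp_all
  moreover have "\<not> contains_Klt {0..<m} F' l t"
  proof
    assume "contains_Klt {0..<m} F' l t"
    then have "contains_Klt U F l t"
      unfolding F'_def by (rule contains_Klt_relabel[OF sg inj assms(4,5)])
    then show False using free by contradiction
  qed
  ultimately have "card F \<in> {card E | E. simple_graph {0..<m} E \<and> \<not> contains_Klt {0..<m} E l t}"
    by (intro CollectI exI[of _ F']) simp
  then show ?thesis
    unfolding ex_Klt_def
    by (rule Max_ge[OF finite_card_simple_graphs[of "{0..<m}" "\<lambda>E. \<not> contains_Klt {0..<m} E l t"],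
          rotated]) simp
qed

lemma ex_Klt_le_choose:
  assumes "1 \<le> l" "1 \<le> t" shows "ex_Klt m l t \<le> m choose 2"
proof -
  let ?S = "{card E | E. simple_graph {0..<m} E \<and> \<not> contains_Klt {0..<m} E l t}"
  have "simple_graph {0..<m} {}" by (simp add: simple_graph_def)
  moreover have "\<not> contains_Klt {0..<m} {} l t"
    using assms by (auto simp: contains_Klt_def)
  ultimately have "card {} \<in> ?S" by (intro CollectI exI[of _ "{}"]) simp
  then have "ex_Klt m l t \<in> ?S"
    unfolding ex_Klt_def
    by (intro Max_in finite_card_simple_graphs[of "{0..<m}" "\<lambda>E. \<not> contains_Klt {0..<m} E l t"])
      auto
  then obtain E where "ex_Klt m l t = card E" "simple_graph {0..<m} E" by blast
  then show ?thesis using simple_graph_card_edges_le[of "{0..<m}" E] by simp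
qed

lemma card_edges_meeting_le:
  assumes sg: "simple_graph V E" and XV: "X \<subseteq> V"
  shows "card {e\<in>E. e \<inter> X \<noteq> {}} \<le> (card X choose 2) + card X * (card V - card X)"
proof -
  have fV: "finite V" using sg by (simp add: simple_graph_def)
  then have fX: "finite X" using XV by (rule finite_subset[rotated])
  have "{e\<in>E. e \<inter> X \<noteq> {}} \<subseteq> {S. S \<subseteq> X \<and> card S = 2} \<union> (\<lambda>(a, b). {a, b}) ` (X \<times> (V - X))"
  proof
    fix e assume "e \<in> {e\<in>E. e \<inter> X \<noteq> {}}"
    then obtain z where z: "e \<in> E" "z \<in> e" "z \<in> X" by blast
    obtain y where y: "e = {z, y}" "z \<noteq> y" "y \<in> V"
      using simple_graph_edge_other[OF sg z(1,2)] by blast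
    show "e \<in> {S. S \<subseteq> X \<and> card S = 2} \<union> (\<lambda>(a, b). {a, b}) ` (X \<times> (V - X))"
    proof (cases "y \<in> X")
      case True
      then show ?thesis using y z by simp
    next
      case False
      then have "(z, y) \<in> X \<times> (V - X)" using z y by simp
      then show ?thesis using y(1) by force
    qed
  qed
  then have "card {e\<in>E. e \<inter> X \<noteq> {}}
      \<le> card ({S. S \<subseteq> X \<and> card S = 2} \<union> (\<lambda>(a, b). {a, b}) ` (X \<times> (V - X)))"
    using fX fV by (intro card_mono) auto
  also have "\<dots> \<le> card {S. S \<subseteq> X \<and> card S = 2} + card ((\<lambda>(a, b). {a, b}) ` (X \<times> (V - X)))"
    by (rule card_Un_le)
  also have "card ((\<lambda>(a, b). {a, b}) ` (X \<times> (V - X))) \<le> card (X \<times> (V - X))"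
    using fX fV by (intro card_image_le) simp
  also have "card (X \<times> (V - X)) = card X * (card V - card X)"
    using fX fV XV by (simp add: card_cartesian_product card_Diff_subset)
  finally show ?thesis using n_subsets[OF fX, of 2] by simp
qed

section \<open>Gluing the components at one vertex\<close>

text \<open>All vertices of \<open>W\<close> survive except one representative per component; the representatives
  are merged into the new vertex \<open>None\<close>, a cut vertex separating the components.\<close>
locale glued_components =
  fixes W :: "'a set" and F :: "'a set set"
  assumes sg: "simple_graph W F"
begin

definition rep :: "'a \<Rightarrow> 'a" where
  "rep v = (SOME u. u \<in> reach W F `` {v})"

definition glue :: "'a \<Rightarrow> 'a option" where
  "glue v = (if rep v = v then None else Some v)"

definition glued_vertices :: "'a option set" where
  "glued_vertices = glue ` W"

definition glued_edges :: "'a option set set" where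
  "glued_edges = (`) glue ` F"

lemma rep_reach:
  assumes "v \<in> W" shows "(v, rep v) \<in> reach W F"
proof -
  have "v \<in> reach W F `` {v}" using equiv_class_self[OF equiv_reach assms] .
  then have "rep v \<in> reach W F `` {v}" unfolding rep_def by (rule someI)
  then show ?thesis by simp
qed

lemma rep_eq: "(u, v) \<in> reach W F \<Longrightarrow> rep u = rep v"
  by (simp only: rep_def equiv_class_eq[OF equiv_reach])

lemma rep_in_class:
  assumes "v \<in> W"
  shows "rep v \<in> W" "rep (rep v) = rep v" "reach W F `` {rep v} = reach W F `` {v}"
proof -
  have v_rep: "(v, rep v) \<in> reach W F" by (rule rep_reach[OF assms])
  then show "rep v \<in> W" by (simp add: reach_def)
  show "rep (rep v) = rep v" using rep_eq[OF v_rep] by simp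
  show "reach W F `` {rep v} = reach W F `` {v}"
    using equiv_class_eq[OF equiv_reach v_rep] by simp
qed

lemma glue_eq_Some: "glue u = Some p \<Longrightarrow> u = p"
  by (simp add: glue_def split: if_splits)

lemma glue_inj_reach:
  assumes "(u, v) \<in> reach W F" "glue u = glue v" shows "u = v"
  using rep_eq[OF assms(1)] assms(2) by (auto simp: glue_def split: if_splits)

lemma inj_on_glue_class: "inj_on glue (reach W F `` {p})"
proof (rule inj_onI)
  fix u v assume "u \<in> reach W F `` {p}" "v \<in> reach W F `` {p}" "glue u = glue v"
  then have "(p, u) \<in> reach W F" "(p, v) \<in> reach W F" "glue u = glue v" by simp_all
  then show "u = v" by (metis glue_inj_reach reach_sym reach_trans)
qed

lemma edge_reach:
  assumes "{u, v} \<in> F" shows "(u, v) \<in> reach W F"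
proof -
  have "{u, v} \<subseteq> W" using assms by (rule simple_graph_edge_subset[OF sg])
  then show ?thesis using assms by (intro reach_edge) auto
qed

lemma edge_subset_class:
  assumes "e \<in> F" "p \<in> e" shows "e \<subseteq> reach W F `` {p}"
proof -
  obtain y where "e = {p, y}" using simple_graph_edge_other[OF sg assms] by blast
  moreover have "p \<in> W" using simple_graph_edge_subset[OF sg assms(1)] assms(2) by blast
  ultimately show ?thesis
    using edge_reach assms(1) equiv_class_self[OF equiv_reach] by auto
qed

lemma edge_has_unglued_end:
  assumes "e \<in> F" obtains p where "p \<in> e" "glue p = Some p"
proof -
  obtain a b where ab: "e = {a, b}" "a \<noteq> b" using simple_graph_edgeE[OF sg assms] by blast
  then have "rep a = rep b" using rep_eq edge_reach assms by blast
  then have "glue a = Some a \<or> glue b = Some b" using ab(2) by (auto simp: glue_def)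
  then show ?thesis using that ab(1) by blast
qed

lemma simple_graph_glued: "simple_graph glued_vertices glued_edges"
  unfolding simple_graph_def
proof (intro conjI ballI)
  show "finite glued_vertices" using sg by (simp add: glued_vertices_def simple_graph_def)
  fix e' assume "e' \<in> glued_edges"
  then obtain e where e: "e' = glue ` e" "e \<in> F" unfolding glued_edges_def by blast
  obtain a b where ab: "e = {a, b}" "a \<noteq> b" "a \<in> W" "b \<in> W"
    using simple_graph_edgeE[OF sg e(2)] by blast
  have "glue a \<noteq> glue b" using glue_inj_reach edge_reach e(2) ab by blast
  moreover have "glue a \<in> glued_vertices" "glue b \<in> glued_vertices"
    using ab by (auto simp: glued_vertices_def)
  ultimately show "\<exists>a b. e' = {a, b} \<and> a \<noteq> b \<and> a \<in> glued_vertices \<and> b \<in> glued_vertices"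
    using e(1) ab(1) by (intro exI[of _ "glue a"] exI[of _ "glue b"]) simp
qed

lemma card_glued_edges: "card glued_edges = card F"
  unfolding glued_edges_def
proof (rule card_image, rule inj_onI)
  fix e1 e2 assume e: "e1 \<in> F" "e2 \<in> F" and eq: "glue ` e1 = glue ` e2"
  obtain p where p: "p \<in> e1" "glue p = Some p" using edge_has_unglued_end[OF e(1)] by blast
  then have "Some p \<in> glue ` e2" using eq by (metis imageI)
  then obtain c where "Some p = glue c" "c \<in> e2" by (rule imageE)
  then have "p \<in> e2" using glue_eq_Some by metis
  then show "e1 = e2"
    using inj_on_image_eq_iff[OF inj_on_glue_class edge_subset_class edge_subset_class] e p(1) eq
    by blast
qed

lemma bij_betw_reps_classes:
  "bij_betw (\<lambda>v. reach W F `` {v}) {v\<in>W. rep v = v} (W // reach W F)"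
  unfolding bij_betw_def
proof
  show "inj_on (\<lambda>v. reach W F `` {v}) {v\<in>W. rep v = v}"
  proof (rule inj_onI)
    fix a b assume "a \<in> {v\<in>W. rep v = v}" "b \<in> {v\<in>W. rep v = v}"
      and class_eq: "reach W F `` {a} = reach W F `` {b}"
    have "rep a = rep b" unfolding rep_def by (simp only: class_eq)
    then show "a = b" using \<open>a \<in> _\<close> \<open>b \<in> _\<close> by simp
  qed
  show "(\<lambda>v. reach W F `` {v}) ` {v\<in>W. rep v = v} = W // reach W F"
  proof
    show "(\<lambda>v. reach W F `` {v}) ` {v\<in>W. rep v = v} \<subseteq> W // reach W F"
      by (auto intro: quotientI)
    show "W // reach W F \<subseteq> (\<lambda>v. reach W F `` {v}) ` {v\<in>W. rep v = v}"
    proof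
      fix C assume "C \<in> W // reach W F"
      then obtain v where "C = reach W F `` {v}" "v \<in> W" by (rule quotientE)
      then have "C = reach W F `` {rep v}" "rep v \<in> {v\<in>W. rep v = v}"
        using rep_in_class[of v] by simp_all
      then show "C \<in> (\<lambda>v. reach W F `` {v}) ` {v\<in>W. rep v = v}" by (rule image_eqI)
    qed
  qed
qed

lemma card_glued_vertices: "card glued_vertices \<le> card W + 1 - card (W // reach W F)"
proof -
  define R where "R = {v\<in>W. rep v = v}"
  have fin: "finite W" using sg by (simp add: simple_graph_def)
  have "glued_vertices \<subseteq> insert None (Some ` (W - R))"
    by (auto simp: glued_vertices_def glue_def R_def)
  then have "card glued_vertices \<le> card (insert None (Some ` (W - R)))"
    using fin by (intro card_mono) auto
  also have "\<dots> \<le> Suc (card (Some ` (W - R)))"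
    using fin by (simp add: card_insert_if)
  also have "card (Some ` (W - R)) = card (W - R)"
    by (rule card_image) (simp add: inj_on_def)
  also have "card (W - R) = card W - card R" using fin by (simp add: R_def card_Diff_subset)
  also have R: "card R = card (W // reach W F)"
    unfolding R_def using bij_betw_reps_classes by (rule bij_betw_same_card)
  finally show ?thesis using card_mono[OF fin, of R] R by (simp add: R_def)
qed

lemma glued_vertex_Some: "Some p \<in> glued_vertices \<Longrightarrow> p \<in> W \<and> rep p \<noteq> p"
  by (auto simp: glued_vertices_def glue_def split: if_splits)

lemma glued_edgeE:
  assumes "{x, y} \<in> glued_edges" "x \<noteq> y"
  obtains a b where "{a, b} \<in> F" "glue a = x" "glue b = y"
proof -
  obtain e where e: "{x, y} = glue ` e" "e \<in> F" using assms(1) unfolding glued_edges_def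
    by (rule imageE)
  obtain a b where ab: "e = {a, b}" using simple_graph_edgeE[OF sg e(2)] by blast
  then have "{x, y} = {glue a, glue b}" using e(1) by simp
  then consider "glue a = x" "glue b = y" | "glue a = y" "glue b = x"
    using assms(2) by (metis doubleton_eq_iff)
  then show ?thesis
  proof cases
    case 1
    then show ?thesis using that e(2) ab by simp
  next
    case 2
    then show ?thesis using that[of b a] e(2) ab by (simp add: insert_commute)
  qed
qed

lemma glued_edge_Some: "{Some p, Some q} \<in> glued_edges \<Longrightarrow> p \<noteq> q \<Longrightarrow> {p, q} \<in> F"
  by (auto elim!: glued_edgeE dest!: glue_eq_Some)

lemma glued_edge_None:
  assumes "{Some p, None} \<in> glued_edges" shows "{p, rep p} \<in> F"
proof -
  obtain a d where "{a, d} \<in> F" "glue a = Some p" "glue d = None"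
    using assms by (auto elim: glued_edgeE)
  moreover from this have "a = p" "rep d = d" by (auto simp: glue_def split: if_splits)
  moreover from calculation have "rep p = rep d" using rep_eq edge_reach by metis
  ultimately show ?thesis by simp
qed

definition unglue :: "'a \<Rightarrow> 'a option \<Rightarrow> 'a" where
  "unglue r x = (case x of None \<Rightarrow> r | Some p \<Rightarrow> p)"

lemma inj_on_unglue: "(\<And>p. Some p \<in> S \<Longrightarrow> p \<noteq> r) \<Longrightarrow> inj_on (unglue r) S"
  by (rule inj_onI) (auto simp: unglue_def split: option.splits)

lemma glued_edge_unglue:
  assumes "{x, y} \<in> glued_edges" "x \<noteq> y" and r: "\<And>p. Some p \<in> {x, y} \<Longrightarrow> rep p = r"
  shows "{unglue r x, unglue r y} \<in> F"
proof (cases x; cases y)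
  fix p q assume "x = Some p" "y = Some q"
  then show ?thesis using glued_edge_Some assms(1,2) by (simp add: unglue_def)
next
  fix q assume "x = None" "y = Some q"
  then have "{Some q, None} \<in> glued_edges" using assms(1) by (simp add: insert_commute)
  then have "{q, rep q} \<in> F" by (rule glued_edge_None)
  then show ?thesis using \<open>x = None\<close> \<open>y = Some q\<close> r by (simp add: unglue_def insert_commute)
next
  fix p assume "x = Some p" "y = None"
  then have "{p, rep p} \<in> F" using glued_edge_None assms(1) by simp
  then show ?thesis using \<open>x = Some p\<close> \<open>y = None\<close> r by (simp add: unglue_def)
next
  assume "x = None" "y = None"
  then show ?thesis using assms(2) by simp
qed

text \<open>A copy of \<open>K\<^sub>l\<^sub>,\<^sub>t\<close> with \<open>l, t \<ge> 2\<close> cannot pass through the cut vertex \<open>None\<close> into two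
  components, so it lifts back to \<open>W\<close>, with \<open>None\<close> replaced by the representative of its component.\<close>
lemma not_contains_Klt_glued:
  assumes free: "\<not> contains_Klt W F l t" and "2 \<le> l" "2 \<le> t"
  shows "\<not> contains_Klt glued_vertices glued_edges l t"
proof
  assume "contains_Klt glued_vertices glued_edges l t"
  then obtain A B where AB: "A \<subseteq> glued_vertices" "B \<subseteq> glued_vertices" "A \<inter> B = {}"
      "card A = l" "card B = t" and edges: "\<And>a b. a \<in> A \<Longrightarrow> b \<in> B \<Longrightarrow> {a, b} \<in> glued_edges"
    unfolding contains_Klt_def by blast
  have "\<not> A \<subseteq> {None}" "\<not> B \<subseteq> {None}"
    using AB(4,5) assms(2,3) card_mono[of "{None}" A] card_mono[of "{None}" B] by auto
  then obtain p1 q1 where p1: "Some p1 \<in> A" and q1: "Some q1 \<in> B"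
    by (metis not_None_eq subsetI singletonI)
  have neq: "x \<noteq> y" if "x \<in> A" "y \<in> B" for x y using AB(3) that by blast
  have same_class: "(p, q1) \<in> reach W F" if "Some p \<in> A \<union> B" for p
  proof (cases "Some p \<in> A")
    case True
    then show ?thesis using edge_reach glued_edge_Some edges q1 neq by blast
  next
    case False
    then have "(p1, p) \<in> reach W F" "(p1, q1) \<in> reach W F"
      using that edge_reach glued_edge_Some edges p1 q1 neq by blast+
    then show ?thesis using reach_sym reach_trans by metis
  qed
  then have rep_p: "rep p = rep q1" if "Some p \<in> A \<union> B" for p using rep_eq that by blast
  have unglued: "p \<in> W \<and> rep p \<noteq> p" if "Some p \<in> A \<union> B" for p
    using that AB(1,2) glued_vertex_Some by blast
  have "rep q1 \<in> W" using rep_in_class(1) q1 unglued by blast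
  then have "unglue (rep q1) ` (A \<union> B) \<subseteq> W"
    using unglued by (auto simp: unglue_def split: option.splits)
  moreover have "inj_on (unglue (rep q1)) (A \<union> B)"
    using unglued rep_p by (intro inj_on_unglue) metis
  moreover have "{unglue (rep q1) a, unglue (rep q1) b} \<in> F" if "a \<in> A" "b \<in> B" for a b
    using glued_edge_unglue[OF edges[OF that] neq[OF that]] rep_p that by blast
  ultimately have "contains_Klt W F l t" using AB(3-5) by (intro contains_Klt_inj_image) auto
  then show False using free by contradiction
qed

end

lemma card_le_ex_Klt_glued:
  assumes "simple_graph W F" "\<not> contains_Klt W F l t" "2 \<le> l" "2 \<le> t"
    and "card W + 1 - card (W // reach W F) \<le> m"
  shows "card F \<le> ex_Klt m l t"
proof -
  interpret glued_components W F by (rule glued_components.intro) (rule assms(1))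
  have "card glued_edges \<le> ex_Klt m l t"
    using card_glued_vertices assms(3-5)
    by (intro card_le_ex_Klt[OF simple_graph_glued not_contains_Klt_glued[OF assms(2-4)]]) simp_all
  then show ?thesis by (simp add: card_glued_edges)
qed

lemma card_edges_le_admissible:
  assumes sg: "simple_graph V E" and free: "\<not> contains_Klt V E l t" and "2 \<le> l" "2 \<le> t"
    and X: "admissible V E s X"
  shows "card E \<le> (card X choose 2) + card X * (card V - card X)
      + ex_Klt (2 * (s - card X) + 1) l t"
proof -
  define W where "W = V - X"
  define EW where "EW = {e\<in>E. e \<subseteq> W}"
  have XV: "X \<subseteq> V" using X by (simp add: admissible_def)
  have finV: "finite V" using sg by (simp add: simple_graph_def)
  have "E \<subseteq> {e\<in>E. e \<inter> X \<noteq> {}} \<union> EW"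
  proof
    fix e assume "e \<in> E"
    then have "e \<subseteq> V" by (rule simple_graph_edge_subset[OF sg])
    then show "e \<in> {e\<in>E. e \<inter> X \<noteq> {}} \<union> EW" using \<open>e \<in> E\<close> by (auto simp: EW_def W_def)
  qed
  then have "card E \<le> card ({e\<in>E. e \<inter> X \<noteq> {}} \<union> EW)"
    using simple_graph_finite_edges[OF sg] by (intro card_mono) (auto simp: EW_def)
  also have "\<dots> \<le> card {e\<in>E. e \<inter> X \<noteq> {}} + card EW" by (rule card_Un_le)
  finally have split: "card E \<le> card {e\<in>E. e \<inter> X \<noteq> {}} + card EW" .
  have sgW: "simple_graph W EW"
    using finV by (intro simple_graph_subgraph[OF sg]) (auto simp: EW_def W_def)
  have freeW: "\<not> contains_Klt W EW l t"
    using free contains_Klt_mono[of W EW l t E V] by (auto simp: EW_def W_def)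
  have "reach W E = reach W EW"
    by (rule reach_cong) (auto simp: EW_def)
  then have comps: "components_minus V E X = W // reach W EW"
    by (simp add: components_minus_eq_quotient W_def)
  have "card W = (\<Sum>C\<in>W // reach W EW. card C)"
    using finV by (intro sum_card_quotient[symmetric] equiv_reach) (simp add: W_def)
  also have "\<dots> \<le> (\<Sum>C\<in>W // reach W EW. 2 * (card C div 2) + 1)"
    by (intro sum_mono) simp
  also have "\<dots> = 2 * (\<Sum>C\<in>W // reach W EW. card C div 2) + card (W // reach W EW)"
    by (simp only: sum.distrib sum_distrib_left[symmetric]) simp
  finally have "card W + 1 - card (W // reach W EW) \<le> 2 * (s - card X) + 1"
    using X comps by (simp add: admissible_def) arith
  then have "card EW \<le> ex_Klt (2 * (s - card X) + 1) l t"
    using card_le_ex_Klt_glued[OF sgW freeW assms(3,4)] by blast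
  then show ?thesis
    using split card_edges_meeting_le[OF sg XV] by linarith
qed

lemma real_choose_two: "real (n choose 2) = real n * (real n - 1) / 2"
proof (induction n)
  case (Suc n)
  then show ?case by (simp add: numeral_2_eq_2 field_simps)
qed simp

lemma corollary3p3_arith:
  fixes x l s n :: real
  assumes "0 \<le> x" "x + 2 \<le> l" "l + 1 \<le> s" "3 * s * (3 * s - 1) \<le> n"
  shows "x * (x - 1) / 2 + x * (n - x) + s * (2 * s + 1) \<le> (l - 1) * n - l * (l - 1) / 2"
proof -
  have gap: "(l - 1) * n - l * (l - 1) / 2 - (x * (x - 1) / 2 + x * (n - x))
      = (l - 1 - x) * (n - (l + x) / 2)"
    by (simp add: field_simps)
  have "3 * s \<le> s * s" using assms(1-3) by (intro mult_right_mono) auto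
  moreover have "9 * (s * s) - 3 * s \<le> n"
    using assms(4) by (simp add: algebra_simps)
  ultimately have "2 * (s * s) + s \<le> n - (l + x) / 2" using assms(1-3) by argo
  moreover have "s * (2 * s + 1) = 2 * (s * s) + s" by algebra
  ultimately have big: "s * (2 * s + 1) \<le> n - (l + x) / 2" by simp
  moreover have "0 \<le> s * (2 * s + 1)" using assms(1-3) by simp
  ultimately have "0 \<le> n - (l + x) / 2" by linarith
  moreover have "1 \<le> l - 1 - x" using assms(2) by linarith
  ultimately have "1 * (n - (l + x) / 2) \<le> (l - 1 - x) * (n - (l + x) / 2)"
    by (intro mult_right_mono)
  then show ?thesis using gap big by argo
qed

lemma real_choose_two_le:
  assumes "2 * (m choose 2) \<le> n" shows "real m * (real m - 1) \<le> real n"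
proof -
  have "real (2 * (m choose 2)) \<le> real n" using assms by (rule of_nat_mono)
  then show ?thesis by (simp add: real_choose_two)
qed

lemma real_Sup_nat_le:
  fixes S :: "nat set"
  assumes "finite S" "\<And>c. c \<in> S \<Longrightarrow> real c \<le> r" "0 \<le> r"
  shows "real (Sup S) \<le> r"
  using assms Max_in[OF assms(1)] by (cases "S = {}") (auto simp: Sup_nat_def)

lemma real_ex_Klt_le:
  assumes "1 \<le> l" "1 \<le> t" "m \<le> 2 * s + 1"
  shows "real (ex_Klt m l t) \<le> real s * (2 * real s + 1)"
proof -
  have "ex_Klt m l t \<le> m choose 2" using assms(1,2) by (rule ex_Klt_le_choose)
  also have "\<dots> \<le> (2 * s + 1) choose 2" using assms(3) by (rule binomial_right_mono)
  finally have "real (ex_Klt m l t) \<le> real ((2 * s + 1) choose 2)" by (rule of_nat_mono)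
  also have "\<dots> = real s * (2 * real s + 1)" by (simp add: real_choose_two algebra_simps)
  finally show ?thesis .
qed

lemma corollary3p3_rhs_nonneg:
  assumes "l + 1 \<le> s" "2 \<le> l" "2 * ((3 * s) choose 2) \<le> n"
  shows "0 \<le> real (l - 1) * real n + real e - real l * (real l - 1) / 2"
proof -
  have "3 * real s * (3 * real s - 1) \<le> real n" using real_choose_two_le[OF assms(3)] by simp
  then have "0 * (0 - 1) / 2 + 0 * (real n - 0) + real s * (2 * real s + 1)
      \<le> (real l - 1) * real n - real l * (real l - 1) / 2"
    using assms(1,2) by (intro corollary3p3_arith) simp_all
  moreover have "0 \<le> real s * (2 * real s + 1)" by simp
  ultimately have "0 \<le> (real l - 1) * real n - real l * (real l - 1) / 2" by linarith
  moreover have "real (l - 1) = real l - 1" using assms(2) by simp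
  ultimately show ?thesis by simp
qed

lemma card_edges_le_corollary3p3_bound:
  assumes "l \<le> t" "l + 1 \<le> s" "2 \<le> l" "2 * ((3 * s) choose 2) \<le> card V"
    and sg: "simple_graph V E" and free: "\<not> contains_Klt V E l t"
    and nomatch: "\<not> contains_matching E (s + 1)" and "xnum V E s \<le> l - 1"
  shows "real (card E) \<le> real (l - 1) * real (card V)
      + real (ex_Klt (2 * (s - l + 1) + 1) l t) - real l * (real l - 1) / 2"
proof -
  obtain X where X: "admissible V E s X" "card X = xnum V E s"
    using admissible_card_xnum[OF sg nomatch] by blast
  define x where "x = card X"
  define n where "n = card V"
  have "X \<subseteq> V" "finite V" using X(1) sg by (simp_all add: admissible_def simple_graph_def)
  then have "x \<le> n" unfolding x_def n_def by (rule card_mono[rotated])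
  have "card E \<le> (x choose 2) + x * (n - x) + ex_Klt (2 * (s - x) + 1) l t"
    unfolding x_def n_def using assms(1,3)
    by (intro card_edges_le_admissible[OF sg free _ _ X(1)]) simp_all
  then have "real (card E)
      \<le> real (x choose 2) + real x * real (n - x) + real (ex_Klt (2 * (s - x) + 1) l t)"
    by (metis of_nat_add of_nat_mono of_nat_mult)
  then have bound: "real (card E) \<le> real x * (real x - 1) / 2 + real x * (real n - real x)
      + real (ex_Klt (2 * (s - x) + 1) l t)"
    using \<open>x \<le> n\<close> by (simp add: real_choose_two of_nat_diff)
  have "real (l - 1) = real l - 1" using assms(3) by simp
  consider "x = l - 1" | "x + 2 \<le> l" using assms(3,8) X(2) x_def by linarith
  then show ?thesis
  proof cases
    case 1
    then have "2 * (s - x) + 1 = 2 * (s - l + 1) + 1" using assms(2,3) by arith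
    moreover have xl: "real x = real l - 1" using 1 assms(3) by simp
    have "real x * (real x - 1) / 2 + real x * (real n - real x)
        = (real l - 1) * real n - real l * (real l - 1) / 2"
      unfolding xl by (simp add: field_simps)
    ultimately show ?thesis
      using bound \<open>real (l - 1) = real l - 1\<close> unfolding n_def by simp
  next
    case 2
    have "3 * real s * (3 * real s - 1) \<le> real n"
      using real_choose_two_le[OF assms(4)] n_def by simp
    then have "real x * (real x - 1) / 2 + real x * (real n - real x) + real s * (2 * real s + 1)
        \<le> (real l - 1) * real n - real l * (real l - 1) / 2"
      using 2 assms(2) by (intro corollary3p3_arith) simp_all
    moreover have "real (ex_Klt (2 * (s - x) + 1) l t) \<le> real s * (2 * real s + 1)"
      using assms(1,3) by (intro real_ex_Klt_le) simp_all
    ultimately show ?thesis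
      using bound \<open>real (l - 1) = real l - 1\<close> n_def by simp
  qed
qed

theorem corollary3p3:
  fixes l t s n x :: nat
  assumes "t \<ge> l" and "s \<ge> l + 1" and "l + 1 \<ge> 3"
    and "n \<ge> 2 * ((3 * s) choose 2)"
    and "1 \<le> x" and "x \<le> l - 1"
  shows "real (ex_KM n l t s x) \<le>
     real (l - 1) * real n + real (ex_Klt (2 * (s - l + 1) + 1) l t) - real l * (real l - 1) / 2"
  unfolding ex_KM_def
proof (rule real_Sup_nat_le, goal_cases)
  case 1
  show ?case by (rule finite_card_simple_graphs) simp
next
  case (2 c)
  then obtain E where "c = card E" "simple_graph {0..<n} E" "\<not> contains_Klt {0..<n} E l t"
    "\<not> contains_matching E (s + 1)" "xnum {0..<n} E s = x" by blast
  then show ?case using card_edges_le_corollary3p3_bound[of l t s "{0..<n}" E] assms by simp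
next
  case 3
  show ?case using corollary3p3_rhs_nonneg assms(2-4) by simp
qed

end
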